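(* Let $T$ be an $\mathcal O$-operator on a Lie algebra $\mathfrak g$ with respect to a representation $(V;\rho)$ and let $x\in\mathfrak g$ be a Nijenhuis element associated to $T$. Then $\rho(x)$ is a Nijenhuis operator on the pre-Lie algebra $(V,\cdot_T)$.
   Context: An $\mathcal O$-operator: linear $T:V\to\mathfrak g$ with $[Tu,Tv]=T(\rho(Tu)(v)-\rho(Tv)(u))$; it induces the pre-Lie product $u\cdot_Tv=\rho(Tu)(v)$ on $V$. An element $x\in\mathfrak g$ is a Nijenhuis element associated to $T$ if $[[x,y],[x,z]]=0$ for all $y,z\in\mathfrak g$, $\rho([x,y])\rho(x)=0$ for all $y\in\mathfrak g$, and $[x,[Tu,x]+T\rho(x)(u)]=0$ for all $u\in V$. A Nijenhuis operator on a pre-Lie algebra $(V,\cdot)$ is a linear $N:V\to V$ with $(Nu)\cdot(Nv)=N((Nu)\cdot v+u\cdot(Nv)-N(u\cdot v))$ for all $u,v\in V$. *)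

theory Defs
  imports Complex_Main
begin

definition lie_algebra :: "('k::field \<Rightarrow> 'g::ab_group_add \<Rightarrow> 'g) \<Rightarrow> ('g \<Rightarrow> 'g \<Rightarrow> 'g) \<Rightarrow> bool" where
  "lie_algebra sg br \<longleftrightarrow> vector_space sg
     \<and> (\<forall>x. Vector_Spaces.linear sg sg (br x))
     \<and> (\<forall>y. Vector_Spaces.linear sg sg (\<lambda>x. br x y))
     \<and> (\<forall>x. br x x = 0)
     \<and> (\<forall>x y z. br x (br y z) + br y (br z x) + br z (br x y) = 0)"

definition lie_representation ::
  "('k::field \<Rightarrow> 'g::ab_group_add \<Rightarrow> 'g) \<Rightarrow> ('g \<Rightarrow> 'g \<Rightarrow> 'g) \<Rightarrow>
   ('k \<Rightarrow> 'v::ab_group_add \<Rightarrow> 'v) \<Rightarrow> ('g \<Rightarrow> 'v \<Rightarrow> 'v) \<Rightarrow> bool" where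
  "lie_representation sg br sv rho \<longleftrightarrow> lie_algebra sg br \<and> vector_space sv
     \<and> (\<forall>x. Vector_Spaces.linear sv sv (rho x))
     \<and> (\<forall>x y v. rho (x + y) v = rho x v + rho y v)
     \<and> (\<forall>c x v. rho (sg c x) v = sv c (rho x v))
     \<and> (\<forall>x y v. rho (br x y) v = rho x (rho y v) - rho y (rho x v))"

definition O_operator ::
  "('k::field \<Rightarrow> 'g::ab_group_add \<Rightarrow> 'g) \<Rightarrow> ('g \<Rightarrow> 'g \<Rightarrow> 'g) \<Rightarrow>
   ('k \<Rightarrow> 'v::ab_group_add \<Rightarrow> 'v) \<Rightarrow> ('g \<Rightarrow> 'v \<Rightarrow> 'v) \<Rightarrow> ('v \<Rightarrow> 'g) \<Rightarrow> bool" where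
  "O_operator sg br sv rho T \<longleftrightarrow> Vector_Spaces.linear sv sg T
     \<and> (\<forall>u v. br (T u) (T v) = T (rho (T u) v - rho (T v) u))"

definition preLie_T :: "('g \<Rightarrow> 'v \<Rightarrow> 'v) \<Rightarrow> ('v \<Rightarrow> 'g) \<Rightarrow> 'v \<Rightarrow> 'v \<Rightarrow> 'v" where
  "preLie_T rho T u v = rho (T u) v"

definition nijenhuis_element ::
  "('g::ab_group_add \<Rightarrow> 'g \<Rightarrow> 'g) \<Rightarrow> ('g \<Rightarrow> 'v::ab_group_add \<Rightarrow> 'v) \<Rightarrow> ('v \<Rightarrow> 'g) \<Rightarrow> 'g \<Rightarrow> bool" where
  "nijenhuis_element br rho T x \<longleftrightarrow>
     (\<forall>y z. br (br x y) (br x z) = 0)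
     \<and> (\<forall>y v. rho (br x y) (rho x v) = 0)
     \<and> (\<forall>u. br x (br (T u) x + T (rho x u)) = 0)"

definition nijenhuis_operator ::
  "('k::field \<Rightarrow> 'v::ab_group_add \<Rightarrow> 'v) \<Rightarrow> ('v \<Rightarrow> 'v \<Rightarrow> 'v) \<Rightarrow> ('v \<Rightarrow> 'v) \<Rightarrow> bool" where
  "nijenhuis_operator sv mult N \<longleftrightarrow> Vector_Spaces.linear sv sv N
     \<and> (\<forall>u v. mult (N u) (N v) = N (mult (N u) v + mult u (N v) - N (mult u v)))"

end

theory Submission
  imports Defs
begin

text \<open>With a = T u and b = T (\<rho>(x) u), the third Nijenhuis condition
  together with antisymmetry gives [x, b] = [x, [x, a]]. Expanding
  \<rho>([x, b]) and \<rho>([x, [x, a]]) through the representation property and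
  killing the term \<rho>([x, a]) \<rho>(x) by the second Nijenhuis condition yields exactly the
  Nijenhuis identity for \<rho>(x) with respect to the product u \<cdot> v = \<rho>(T u) v.\<close>

lemma linear_imp_additive:
  assumes "Vector_Spaces.linear s1 s2 f"
  shows "additive f"
  using assms unfolding Vector_Spaces.linear_def module_hom_def module_hom_axioms_def additive_def
  by blast

lemma lie_algebra_bracket_additive:
  assumes "lie_algebra sg br"
  shows "additive (br c)" and "additive (\<lambda>z. br z c)"
  using assms linear_imp_additive unfolding lie_algebra_def by blast+

lemma lie_algebra_bracket_antisym:
  assumes "lie_algebra sg br"
  shows "br a b = - br b a"
proof -
  have alt: "br c c = 0" for c
    using assms unfolding lie_algebra_def by blast
  have "br (a + b) (a + b) = br a a + br b a + (br a b + br b b)"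
    by (simp only: additive.add[OF lie_algebra_bracket_additive(1)[OF assms]]
      additive.add[OF lie_algebra_bracket_additive(2)[OF assms]])
  then have "br a b + br b a = 0"
    using alt by (simp add: add.commute)
  then show ?thesis by (simp add: eq_neg_iff_add_eq_0)
qed

lemma nijenhuis_element_bracket_T:
  assumes lie: "lie_algebra sg br" and nij: "nijenhuis_element br rho T x"
  shows "br x (T (rho x u)) = br x (br x (T u))"
proof -
  interpret additive "br x"
    using lie_algebra_bracket_additive(1)[OF lie] .
  have "br x (br (T u) x) + br x (T (rho x u)) = 0"
    using nij add unfolding nijenhuis_element_def by metis
  then have "br x (T (rho x u)) = - br x (br (T u) x)"
    by (simp add: eq_neg_iff_add_eq_0 add.commute)
  also have "\<dots> = br x (br x (T u))"
    using lie_algebra_bracket_antisym[OF lie, of "T u" x] minus by simp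
  finally show ?thesis .
qed

lemma lie_representation_nijenhuis_identity:
  assumes rep: "lie_representation sg br sv rho"
    and b: "br x b = br x (br x a)"
    and kill: "\<And>w. rho (br x a) (rho x w) = 0"
  shows "rho b (rho x v) = rho x (rho b v + rho a (rho x v) - rho x (rho a v))"
proof -
  have rbr: "rho (br y z) w = rho y (rho z w) - rho z (rho y w)" for y z w
    using rep unfolding lie_representation_def by blast
  interpret additive "rho x"
    using rep linear_imp_additive unfolding lie_representation_def by blast
  have "rho b (rho x v) = rho x (rho b v) - rho (br x b) v"
    using rbr[of x b v] by (simp add: algebra_simps)
  also have "rho (br x b) v = rho x (rho (br x a) v)"
    using b rbr[of x "br x a" v] kill by simp
  also have "\<dots> = rho x (rho x (rho a v)) - rho x (rho a (rho x v))"
    using rbr diff by simp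
  also have "rho x (rho b v) - \<dots> = rho x (rho b v + rho a (rho x v) - rho x (rho a v))"
    by (simp only: add diff) (simp add: algebra_simps)
  finally show ?thesis .
qed

theorem proposition4p11:
  fixes sg :: "'k::field \<Rightarrow> 'g::ab_group_add \<Rightarrow> 'g"
    and br :: "'g \<Rightarrow> 'g \<Rightarrow> 'g"
    and sv :: "'k \<Rightarrow> 'v::ab_group_add \<Rightarrow> 'v"
    and rho :: "'g \<Rightarrow> 'v \<Rightarrow> 'v"
    and T :: "'v \<Rightarrow> 'g"
    and x :: 'g
  assumes "lie_representation sg br sv rho"
    and "O_operator sg br sv rho T"
    and "nijenhuis_element br rho T x"
  shows "nijenhuis_operator sv (preLie_T rho T) (rho x)"
proof -
  have lie: "lie_algebra sg br" and lin: "Vector_Spaces.linear sv sv (rho x)"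
    using assms(1) unfolding lie_representation_def by auto
  have kill: "rho (br x y) (rho x w) = 0" for y w
    using assms(3) unfolding nijenhuis_element_def by blast
  show ?thesis
    unfolding nijenhuis_operator_def preLie_T_def
    using lin lie_representation_nijenhuis_identity[OF assms(1)
        nijenhuis_element_bracket_T[OF lie assms(3)] kill]
    by blast
qed

end
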